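(* Let $\alpha>2$ and $N>0$, and define for $p\in[0,1]$ and $\beta>0$ \[ R(p,\beta)=p\,\log(1+\beta)\,e^{-N p\,\beta^{2/\alpha}} . \] Let $\Lambda^*=\Lambda^*(\alpha)>0$ denote the unique solution of \[ \frac{\alpha}{2}=\left(1+{\Lambda^*}^{\alpha/2}\right)\log\left(1+\frac{1}{{\Lambda^*}^{\alpha/2}}\right). \] If $N>\Lambda^*$, then $R$ is maximized over $[0,1]\times(0,\infty)$ at $p^*=\Lambda^*/N$ and $\beta^*={\Lambda^*}^{-\alpha/2}$. If $N\le\Lambda^*$, then $R$ is maximized at $p^*=1$ and $\beta^*$ equal to the unique solution of \[ \frac{\alpha}{2N{\beta^*}^{2/\alpha}}=\left(1+\frac{1}{\beta^*}\right)\log(1+\beta^* ). \]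
   Context: $R(p,\beta)$ is the limiting expected throughput per link of a single wireless network using a random access protocol with access probability $p$ and target signal-to-interference ratio $\beta$, where $N$ is the average number of nodes per transmission disc and $\alpha$ is the pathloss exponent. $\log$ denotes the natural logarithm. *)

theory Defs
  imports Complex_Main
begin

definition R :: "real \<Rightarrow> real \<Rightarrow> real \<Rightarrow> real \<Rightarrow> real" where
  "R \<alpha> N p \<beta> = p * ln (1 + \<beta>) * exp (- N * p * \<beta> powr (2 / \<alpha>))"

definition lambda_eq :: "real \<Rightarrow> real \<Rightarrow> bool" where
  "lambda_eq \<alpha> \<Lambda> \<longleftrightarrow> \<Lambda> > 0 \<and>
     \<alpha> / 2 = (1 + \<Lambda> powr (\<alpha> / 2)) * ln (1 + 1 / \<Lambda> powr (\<alpha> / 2))"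

definition Lambda_star :: "real \<Rightarrow> real" where
  "Lambda_star \<alpha> = (THE \<Lambda>. lambda_eq \<alpha> \<Lambda>)"

definition beta_eq :: "real \<Rightarrow> real \<Rightarrow> real \<Rightarrow> bool" where
  "beta_eq \<alpha> N \<beta> \<longleftrightarrow> \<beta> > 0 \<and>
     \<alpha> / (2 * N * \<beta> powr (2 / \<alpha>)) = (1 + 1 / \<beta>) * ln (1 + \<beta>)"

definition is_maximizer :: "real \<Rightarrow> real \<Rightarrow> real \<Rightarrow> real \<Rightarrow> bool" where
  "is_maximizer \<alpha> N p0 b0 \<longleftrightarrow> p0 \<in> {0..1} \<and> b0 > 0 \<and>
     (\<forall>p \<in> {0..1}. \<forall>b > 0. R \<alpha> N p b \<le> R \<alpha> N p0 b0)"

end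

(*
  For fixed beta put c = N beta^(2/alpha). Since p exp(-c p) is largest at p = 1/c, with value
  exp(-1)/c, R(p, beta) is at most exp(-1)/N * ln(1+beta) / beta^(2/alpha). The derivative of
  the latter has the sign of 1 - (2/alpha) h(beta), where h(x) = (1 + 1/x) ln(1+x) is increasing;
  so it peaks where h(beta) = alpha/2, i.e. at beta = Lambda*^(-alpha/2), and there 1/c = Lambda*/N.
  If N > Lambda* this choice of p lies in [0,1] and the bound is attained.
  Otherwise the constraint p <= 1 binds for the beta with c <= 1, where R(p, beta) <= R(1, beta),
  and R(1, .) increases as long as (2N/alpha) beta^(2/alpha) h(beta) < 1 and decreases afterwards;
  for the beta with c >= 1 the first bound applies, it is decreasing there, and it agrees with
  R(1, .) at c = 1.
*)
theory Submission
  imports Defs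
begin

definition log_ratio :: "real \<Rightarrow> real" where
  "log_ratio x = (1 + 1 / x) * ln (1 + x)"

lemma has_real_derivative_log_ratio:
  assumes "0 < x"
  shows "(log_ratio has_real_derivative (x - ln (1 + x)) / x\<^sup>2) (at x)"
  unfolding log_ratio_def using assms
  by (auto intro!: derivative_eq_intros,
      simp add: divide_simps power2_eq_square, simp add: algebra_simps)

lemma strict_mono_on_log_ratio: "strict_mono_on {0<..} log_ratio"
proof (rule strict_mono_onI)
  fix x y :: real assume "x \<in> {0<..}" "x < y"
  show "log_ratio x < log_ratio y"
  proof (rule DERIV_pos_imp_increasing[OF \<open>x < y\<close>])
    fix t assume "x \<le> t" "t \<le> y"
    with \<open>x \<in> {0<..}\<close> have "0 < t" by simp
    then have "0 < (t - ln (1 + t)) / t\<^sup>2" using ln_add_one_self_less_self[of t] by simp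
    then show "\<exists>D. (log_ratio has_real_derivative D) (at t) \<and> 0 < D"
      using has_real_derivative_log_ratio[OF \<open>0 < t\<close>] by blast
  qed
qed

lemma continuous_on_log_ratio: "continuous_on {0<..} log_ratio"
  using has_real_derivative_log_ratio
  by (intro continuous_at_imp_continuous_on ballI DERIV_isCont) auto

lemma log_ratio_pos: "0 < x \<Longrightarrow> 0 < log_ratio x"
  unfolding log_ratio_def by (auto intro!: mult_pos_pos add_pos_pos)

lemma ex_log_ratio_eq:
  assumes "1 < y"
  shows "\<exists>x>0. log_ratio x = y"
proof -
  define a where "a = y - 1"
  define b where "b = exp y"
  have "0 < a" using assms by (simp add: a_def)
  have "log_ratio a \<le> (1 + 1 / a) * a"
    unfolding log_ratio_def using \<open>0 < a\<close> ln_add_one_self_le_self[of a]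
    by (intro mult_left_mono) auto
  also have "\<dots> = y" using \<open>0 < a\<close> by (simp add: a_def field_simps)
  finally have "log_ratio a \<le> y" .
  have "0 < b" by (simp add: b_def)
  have "y = ln b" by (simp add: b_def)
  also have "\<dots> \<le> ln (1 + b)" using \<open>0 < b\<close> by simp
  also have "\<dots> \<le> log_ratio b" unfolding log_ratio_def by (simp add: b_def algebra_simps)
  finally have "y \<le> log_ratio b" .
  have "a \<le> b"
    unfolding a_def b_def using exp_ge_add_one_self[of y] by linarith
  moreover have "continuous_on {a..b} log_ratio"
    using continuous_on_log_ratio by (rule continuous_on_subset) (use \<open>0 < a\<close> in auto)
  ultimately obtain x where "a \<le> x" "log_ratio x = y"
    using IVT'[of log_ratio a y b] \<open>log_ratio a \<le> y\<close> \<open>y \<le> log_ratio b\<close> by auto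
  with \<open>0 < a\<close> show ?thesis by (intro exI[of _ x]) auto
qed

definition ln_div_powr :: "real \<Rightarrow> real \<Rightarrow> real" where
  "ln_div_powr d x = ln (1 + x) / x powr d"

lemma has_real_derivative_ln_div_powr:
  assumes "0 < x"
  shows "(ln_div_powr d has_real_derivative
           1 / ((1 + x) * x powr d) * (1 - d * log_ratio x)) (at x)"
  unfolding ln_div_powr_def log_ratio_def using assms
  by (auto intro!: derivative_eq_intros simp: powr_diff,
      simp add: divide_simps, simp add: algebra_simps)

definition powr_log_ratio :: "real \<Rightarrow> real \<Rightarrow> real" where
  "powr_log_ratio d x = x powr d * log_ratio x"

lemma strict_mono_on_powr_log_ratio:
  assumes "0 \<le> d"
  shows "strict_mono_on {0<..} (powr_log_ratio d)"
proof (rule strict_mono_onI)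
  fix x y :: real assume "x \<in> {0<..}" "x < y"
  then have "x powr d * log_ratio x < x powr d * log_ratio y"
    using strict_mono_onD[OF strict_mono_on_log_ratio] by simp
  also have "\<dots> \<le> y powr d * log_ratio y"
    using \<open>x \<in> {0<..}\<close> \<open>x < y\<close> assms log_ratio_pos[of y]
    by (intro mult_right_mono powr_mono2) auto
  finally show "powr_log_ratio d x < powr_log_ratio d y" by (simp add: powr_log_ratio_def)
qed

lemma continuous_on_powr_log_ratio: "continuous_on {0<..} (powr_log_ratio d)"
  unfolding powr_log_ratio_def
  by (intro continuous_on_mult continuous_on_log_ratio continuous_on_powr' continuous_on_id
      continuous_on_const) auto

context
  fixes f w s :: "real \<Rightarrow> real" and c :: real
  assumes derivative: "\<And>t. 0 < t \<Longrightarrow> (f has_real_derivative w t * (1 - s t)) (at t)"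
    and weight_nonneg: "\<And>t. 0 < t \<Longrightarrow> 0 \<le> w t"
    and mono_on_s: "mono_on {0<..} s"
    and crossing: "0 < c" "s c = 1"
begin

lemma nondecreasing_below_crossing:
  assumes "0 < x" "x \<le> y" "y \<le> c"
  shows "f x \<le> f y"
proof (rule DERIV_nonneg_imp_nondecreasing[OF \<open>x \<le> y\<close>])
  fix t assume "x \<le> t" "t \<le> y"
  with assms have "0 < t" "s t \<le> 1" using monotone_onD[OF mono_on_s, of t c] crossing by auto
  then show "\<exists>D. (f has_real_derivative D) (at t) \<and> 0 \<le> D"
    using derivative weight_nonneg by (intro exI conjI) auto
qed

lemma nonincreasing_above_crossing:
  assumes "c \<le> x" "x \<le> y"
  shows "f y \<le> f x"
proof (rule DERIV_nonpos_imp_nonincreasing[OF \<open>x \<le> y\<close>])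
  fix t assume "x \<le> t" "t \<le> y"
  with assms have "0 < t" "1 \<le> s t" using monotone_onD[OF mono_on_s, of c t] crossing by auto
  then have "w t * (1 - s t) \<le> 0" using weight_nonneg by (intro mult_nonneg_nonpos) auto
  then show "\<exists>D. (f has_real_derivative D) (at t) \<and> D \<le> 0"
    using derivative \<open>0 < t\<close> by blast
qed

lemma le_at_crossing: "0 < x \<Longrightarrow> f x \<le> f c"
  using nondecreasing_below_crossing[of x c] nonincreasing_above_crossing[of c x] crossing
  by (cases "x \<le> c") auto

end

lemma mult_exp_neg_mult_le:
  fixes c p :: real
  assumes "0 < c"
  shows "p * exp (- c * p) \<le> exp (-1) / c"
proof -
  have "c * p \<le> exp (c * p - 1)" using exp_ge_add_one_self[of "c * p - 1"] by simp
  then have "c * p * exp (- c * p) \<le> exp (-1)"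
    by (simp add: exp_diff exp_minus field_simps)
  then show ?thesis using assms by (simp add: field_simps)
qed

lemma mult_exp_neg_mult_le_exp:
  fixes c p :: real
  assumes "c \<le> 1" "p \<le> 1"
  shows "p * exp (- c * p) \<le> exp (- c)"
proof -
  have "p \<le> 1 + c * (p - 1)"
    using mult_nonneg_nonpos[of "1 - c" "p - 1"] assms by (simp add: algebra_simps)
  also have "\<dots> \<le> exp (c * (p - 1))" by (rule exp_ge_add_one_self)
  finally have "p * exp (- c * p) \<le> exp (c * (p - 1)) * exp (- c * p)"
    by (intro mult_right_mono) auto
  also have "\<dots> = exp (- c)" by (simp add: exp_add[symmetric] algebra_simps)
  finally show ?thesis .
qed

lemma R_le_ln_div_powr:
  assumes "0 < N" "0 < b"
  shows "R \<alpha> N p b \<le> exp (-1) / N * ln_div_powr (2 / \<alpha>) b"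
proof -
  have "R \<alpha> N p b = ln (1 + b) * (p * exp (- (N * b powr (2 / \<alpha>)) * p))"
    by (simp add: R_def algebra_simps)
  also have "\<dots> \<le> ln (1 + b) * (exp (-1) / (N * b powr (2 / \<alpha>)))"
    using assms by (intro mult_left_mono mult_exp_neg_mult_le) auto
  also have "\<dots> = exp (-1) / N * ln_div_powr (2 / \<alpha>) b"
    by (simp add: ln_div_powr_def)
  finally show ?thesis .
qed

lemma R_le_R_one:
  assumes "0 \<le> b" "p \<le> 1" "N * b powr (2 / \<alpha>) \<le> 1"
  shows "R \<alpha> N p b \<le> R \<alpha> N 1 b"
proof -
  have "R \<alpha> N p b = ln (1 + b) * (p * exp (- (N * b powr (2 / \<alpha>)) * p))"
    by (simp add: R_def algebra_simps)
  also have "\<dots> \<le> ln (1 + b) * exp (- (N * b powr (2 / \<alpha>)))"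
    using assms by (intro mult_left_mono mult_exp_neg_mult_le_exp) auto
  also have "\<dots> = R \<alpha> N 1 b" by (simp add: R_def)
  finally show ?thesis .
qed

lemma R_at_optimal_access:
  assumes "0 < N" "0 < b"
  shows "R \<alpha> N (1 / (N * b powr (2 / \<alpha>))) b = exp (-1) / N * ln_div_powr (2 / \<alpha>) b"
  using assms by (simp add: R_def ln_div_powr_def field_simps)

lemma has_real_derivative_R_one:
  assumes "0 < x"
  shows "(R \<alpha> N 1 has_real_derivative
           exp (- N * x powr (2 / \<alpha>)) / (1 + x)
           * (1 - N * (2 / \<alpha>) * powr_log_ratio (2 / \<alpha>) x)) (at x)"
  unfolding R_def[abs_def] powr_log_ratio_def log_ratio_def using assms
  by (auto intro!: derivative_eq_intros simp: field_simps powr_diff powr_minus)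

lemma mono_on_mult_log_ratio: "0 \<le> d \<Longrightarrow> mono_on {0<..} (\<lambda>t. d * log_ratio t)"
  by (intro mono_onI mult_left_mono strict_mono_on_leD[OF strict_mono_on_log_ratio]) auto

lemma ln_div_powr_le_at_crossing:
  assumes "0 \<le> d" "0 < c" "d * log_ratio c = 1" "0 < x"
  shows "ln_div_powr d x \<le> ln_div_powr d c"
proof (rule le_at_crossing[where f = "ln_div_powr d" and w = "\<lambda>t. 1 / ((1 + t) * t powr d)"
      and s = "\<lambda>t. d * log_ratio t"])
  show "(ln_div_powr d has_real_derivative 1 / ((1 + t) * t powr d) * (1 - d * log_ratio t)) (at t)"
    if "0 < t" for t
    using that by (rule has_real_derivative_ln_div_powr)
qed (use assms mono_on_mult_log_ratio in auto)

lemma ln_div_powr_antimono_above_crossing: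
  assumes "0 \<le> d" "0 < c" "d * log_ratio c = 1" "c \<le> x" "x \<le> y"
  shows "ln_div_powr d y \<le> ln_div_powr d x"
proof (rule nonincreasing_above_crossing[where f = "ln_div_powr d"
      and w = "\<lambda>t. 1 / ((1 + t) * t powr d)" and s = "\<lambda>t. d * log_ratio t"])
  show "(ln_div_powr d has_real_derivative 1 / ((1 + t) * t powr d) * (1 - d * log_ratio t)) (at t)"
    if "0 < t" for t
    using that by (rule has_real_derivative_ln_div_powr)
qed (use assms mono_on_mult_log_ratio in auto)

lemma R_one_le_at_crossing:
  assumes "0 < \<alpha>" "0 < N" "0 < c" "powr_log_ratio (2 / \<alpha>) c = \<alpha> / (2 * N)" "0 < x"
  shows "R \<alpha> N 1 x \<le> R \<alpha> N 1 c"
proof (rule le_at_crossing[where f = "R \<alpha> N 1" and w = "\<lambda>t. exp (- N * t powr (2 / \<alpha>)) / (1 + t)"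
      and s = "\<lambda>t. N * (2 / \<alpha>) * powr_log_ratio (2 / \<alpha>) t"])
  show "(R \<alpha> N 1 has_real_derivative exp (- N * t powr (2 / \<alpha>)) / (1 + t)
          * (1 - N * (2 / \<alpha>) * powr_log_ratio (2 / \<alpha>) t)) (at t)" if "0 < t" for t
    using that by (rule has_real_derivative_R_one)
  show "mono_on {0<..} (\<lambda>t. N * (2 / \<alpha>) * powr_log_ratio (2 / \<alpha>) t)"
    using assms(1,2)
    by (intro mono_onI mult_left_mono strict_mono_on_leD[OF strict_mono_on_powr_log_ratio]) auto
qed (use assms in auto)

lemma powr_neg_half_powr:
  fixes x \<alpha> :: real
  assumes "0 < x" "\<alpha> \<noteq> 0"
  shows "(x powr (- \<alpha> / 2)) powr (2 / \<alpha>) = 1 / x"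
proof -
  have "- \<alpha> / 2 * (2 / \<alpha>) = - 1" using assms(2) by simp
  then show ?thesis using assms(1) by (simp only: powr_powr powr_neg_one)
qed

lemma lambda_eq_iff:
  assumes "0 < \<alpha>"
  shows "lambda_eq \<alpha> L \<longleftrightarrow> 0 < L \<and> log_ratio (L powr (- \<alpha> / 2)) = \<alpha> / 2"
proof (cases "0 < L")
  case True
  have inverse: "L powr (- \<alpha> / 2) = 1 / L powr (\<alpha> / 2)"
    by (simp add: powr_minus_divide[symmetric])
  have "0 < L powr (\<alpha> / 2)" using True by simp
  then show ?thesis using True unfolding lambda_eq_def log_ratio_def inverse by (auto simp: field_simps)
qed (auto simp: lambda_eq_def)

lemma lambda_eqD:
  assumes "0 < \<alpha>" "lambda_eq \<alpha> L"
  shows "0 < L" "0 < L powr (- \<alpha> / 2)" "2 / \<alpha> * log_ratio (L powr (- \<alpha> / 2)) = 1"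
    and "(L powr (- \<alpha> / 2)) powr (2 / \<alpha>) = 1 / L"
  using assms lambda_eq_iff[of \<alpha> L] powr_neg_half_powr[of L \<alpha>] by auto

lemma ex1_lambda_eq:
  assumes "2 < \<alpha>"
  shows "\<exists>!L. lambda_eq \<alpha> L"
proof -
  have "0 < \<alpha>" using assms by simp
  obtain b where b: "0 < b" "log_ratio b = \<alpha> / 2" using ex_log_ratio_eq[of "\<alpha> / 2"] assms by auto
  have inverse_powr: "(x powr (- \<alpha> / 2)) powr (- 2 / \<alpha>) = x" if "0 < x" for x
    using that \<open>0 < \<alpha>\<close> by (simp add: powr_powr)
  show ?thesis
  proof (rule ex1I)
    show "lambda_eq \<alpha> (b powr (- 2 / \<alpha>))"
      using b \<open>0 < \<alpha>\<close> by (simp add: lambda_eq_iff powr_powr)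
  next
    fix L assume "lambda_eq \<alpha> L"
    then have "0 < L" "L powr (- \<alpha> / 2) = b"
      using b lambda_eq_iff[OF \<open>0 < \<alpha>\<close>] strict_mono_on_eq[OF strict_mono_on_log_ratio] by auto
    then show "L = b powr (- 2 / \<alpha>)" using inverse_powr by metis
  qed
qed

lemma beta_eq_iff:
  assumes "0 < \<alpha>" "0 < N"
  shows "beta_eq \<alpha> N b \<longleftrightarrow> 0 < b \<and> powr_log_ratio (2 / \<alpha>) b = \<alpha> / (2 * N)"
proof (cases "0 < b")
  case True
  then have "0 < b powr (2 / \<alpha>)" by simp
  with True assms show ?thesis
    by (auto simp: beta_eq_def powr_log_ratio_def log_ratio_def field_simps)
qed (auto simp: beta_eq_def)

lemma is_maximizer_interior:
  assumes "0 < \<alpha>" "lambda_eq \<alpha> L" "L < N"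
  shows "is_maximizer \<alpha> N (L / N) (L powr (- \<alpha> / 2))"
proof -
  define b0 where "b0 = L powr (- \<alpha> / 2)"
  have "0 < L" "0 < b0" and crossing: "2 / \<alpha> * log_ratio b0 = 1"
    and b0_powr: "b0 powr (2 / \<alpha>) = 1 / L"
    using lambda_eqD[OF assms(1,2)] by (simp_all add: b0_def)
  have "0 < N" using \<open>0 < L\<close> assms(3) by simp
  have "R \<alpha> N p b \<le> R \<alpha> N (L / N) b0" if "0 < b" for p b
  proof -
    have "R \<alpha> N p b \<le> exp (-1) / N * ln_div_powr (2 / \<alpha>) b"
      using R_le_ln_div_powr \<open>0 < N\<close> that by blast
    also have "\<dots> \<le> exp (-1) / N * ln_div_powr (2 / \<alpha>) b0"
      using ln_div_powr_le_at_crossing[OF _ \<open>0 < b0\<close> crossing that] assms(1) \<open>0 < N\<close>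
      by (intro mult_left_mono) auto
    also have "\<dots> = R \<alpha> N (1 / (N * b0 powr (2 / \<alpha>))) b0"
      using R_at_optimal_access[OF \<open>0 < N\<close> \<open>0 < b0\<close>] by simp
    also have "\<dots> = R \<alpha> N (L / N) b0" by (simp add: b0_powr)
    finally show ?thesis .
  qed
  then show ?thesis
    using \<open>0 < L\<close> \<open>0 < b0\<close> assms(3) by (simp add: is_maximizer_def b0_def)
qed

lemma ex1_beta_eq:
  assumes "0 < \<alpha>" "0 < N" "lambda_eq \<alpha> L" "N \<le> L"
  shows "\<exists>!\<beta>. beta_eq \<alpha> N \<beta>"
proof -
  define b0 where "b0 = L powr (- \<alpha> / 2)"
  define b1 where "b1 = N powr (- \<alpha> / 2)"
  have "0 < L" "0 < b0" and b0_crossing: "log_ratio b0 = \<alpha> / 2"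
    and b0_powr: "b0 powr (2 / \<alpha>) = 1 / L"
    using lambda_eqD[OF assms(1,3)] assms(1) by (simp_all add: b0_def field_simps)
  have "0 < b1" using assms(2) by (simp add: b1_def)
  have "b1 powr (2 / \<alpha>) = 1 / N"
    unfolding b1_def using assms(1,2) by (intro powr_neg_half_powr) auto
  have "b0 \<le> b1"
    unfolding b0_def b1_def using assms by (intro powr_mono2') auto
  have "powr_log_ratio (2 / \<alpha>) b0 = \<alpha> / (2 * L)"
    by (simp add: powr_log_ratio_def b0_powr b0_crossing)
  also have "\<dots> \<le> \<alpha> / (2 * N)"
    using assms by (intro divide_left_mono) auto
  finally have lower: "powr_log_ratio (2 / \<alpha>) b0 \<le> \<alpha> / (2 * N)" .
  have "\<alpha> / (2 * N) = log_ratio b0 / N" by (simp add: b0_crossing)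
  also have "\<dots> \<le> log_ratio b1 / N"
    using strict_mono_on_leD[OF strict_mono_on_log_ratio] \<open>0 < b0\<close> \<open>b0 \<le> b1\<close> assms(2)
    by (intro divide_right_mono) auto
  also have "\<dots> = powr_log_ratio (2 / \<alpha>) b1"
    by (simp add: powr_log_ratio_def \<open>b1 powr (2 / \<alpha>) = 1 / N\<close>)
  finally have upper: "\<alpha> / (2 * N) \<le> powr_log_ratio (2 / \<alpha>) b1" .
  have "continuous_on {b0..b1} (powr_log_ratio (2 / \<alpha>))"
    using continuous_on_powr_log_ratio by (rule continuous_on_subset) (use \<open>0 < b0\<close> in auto)
  then obtain \<beta> where "b0 \<le> \<beta>" and \<beta>_crossing: "powr_log_ratio (2 / \<alpha>) \<beta> = \<alpha> / (2 * N)"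
    using IVT'[OF lower upper \<open>b0 \<le> b1\<close>] by auto
  with \<open>0 < b0\<close> have "0 < \<beta>" by simp
  then have "beta_eq \<alpha> N \<beta>" using \<beta>_crossing beta_eq_iff[OF assms(1,2)] by simp
  moreover have "\<beta>' = \<beta>" if "beta_eq \<alpha> N \<beta>'" for \<beta>'
  proof -
    have "0 < \<beta>'" "powr_log_ratio (2 / \<alpha>) \<beta>' = powr_log_ratio (2 / \<alpha>) \<beta>"
      using that \<beta>_crossing beta_eq_iff[OF assms(1,2)] by auto
    with \<open>0 < \<beta>\<close> show ?thesis
      using strict_mono_on_eq[OF strict_mono_on_powr_log_ratio, of "2 / \<alpha>" \<beta>' \<beta>] assms(1) by simp
  qed
  ultimately show ?thesis by blast
qed

lemma is_maximizer_full_access: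
  assumes "0 < \<alpha>" "0 < N" "lambda_eq \<alpha> L" "N \<le> L" "beta_eq \<alpha> N \<beta>"
  shows "is_maximizer \<alpha> N 1 \<beta>"
proof -
  define b0 where "b0 = L powr (- \<alpha> / 2)"
  \<comment> \<open>\<open>b1\<close> is where the unconstrained optimal access probability \<open>1 / (N * b powr (2 / \<alpha>))\<close> is 1.\<close>
  define b1 where "b1 = N powr (- \<alpha> / 2)"
  have "0 < b0" and crossing: "2 / \<alpha> * log_ratio b0 = 1"
    using lambda_eqD[OF assms(1,3)] by (simp_all add: b0_def)
  have "0 < b1" using assms(2) by (simp add: b1_def)
  have b1_powr: "b1 powr (2 / \<alpha>) = 1 / N"
    unfolding b1_def using assms(1,2) by (intro powr_neg_half_powr) auto
  have "b0 \<le> b1"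
    unfolding b0_def b1_def using assms by (intro powr_mono2') auto
  have "0 < \<beta>" and \<beta>_crossing: "powr_log_ratio (2 / \<alpha>) \<beta> = \<alpha> / (2 * N)"
    using assms(5) beta_eq_iff[OF assms(1,2)] by auto
  have "R \<alpha> N p b \<le> R \<alpha> N 1 \<beta>" if "p \<le> 1" "0 < b" for p b
  proof (cases "N * b powr (2 / \<alpha>) \<le> 1")
    case True
    then have "R \<alpha> N p b \<le> R \<alpha> N 1 b" using R_le_R_one that by simp
    also have "\<dots> \<le> R \<alpha> N 1 \<beta>"
      using R_one_le_at_crossing[OF assms(1,2) \<open>0 < \<beta>\<close> \<beta>_crossing that(2)] .
    finally show ?thesis .
  next
    case False
    have "b1 \<le> b"
    proof (rule ccontr)
      assume "\<not> b1 \<le> b"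
      then have "b powr (2 / \<alpha>) \<le> b1 powr (2 / \<alpha>)"
        using that assms(1) by (intro powr_mono2) auto
      with False assms(2) show False by (simp add: b1_powr field_simps)
    qed
    have "R \<alpha> N p b \<le> exp (-1) / N * ln_div_powr (2 / \<alpha>) b"
      using R_le_ln_div_powr assms(2) that(2) by blast
    also have "\<dots> \<le> exp (-1) / N * ln_div_powr (2 / \<alpha>) b1"
      using ln_div_powr_antimono_above_crossing[OF _ \<open>0 < b0\<close> crossing \<open>b0 \<le> b1\<close> \<open>b1 \<le> b\<close>]
        assms(1,2)
      by (intro mult_left_mono) auto
    also have "\<dots> = R \<alpha> N (1 / (N * b1 powr (2 / \<alpha>))) b1"
      using R_at_optimal_access[OF assms(2) \<open>0 < b1\<close>] by simp
    also have "\<dots> = R \<alpha> N 1 b1" using assms(2) by (simp add: b1_powr)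
    also have "\<dots> \<le> R \<alpha> N 1 \<beta>"
      using R_one_le_at_crossing[OF assms(1,2) \<open>0 < \<beta>\<close> \<beta>_crossing \<open>0 < b1\<close>] .
    finally show ?thesis .
  qed
  then show ?thesis using \<open>0 < \<beta>\<close> by (simp add: is_maximizer_def)
qed

theorem theorem1:
  fixes \<alpha> N :: real
  assumes "\<alpha> > 2" and "N > 0"
  shows "(\<exists>!\<Lambda>. lambda_eq \<alpha> \<Lambda>)
    \<and> (N > Lambda_star \<alpha> \<longrightarrow>
         is_maximizer \<alpha> N (Lambda_star \<alpha> / N) (Lambda_star \<alpha> powr (- \<alpha> / 2)))
    \<and> (N \<le> Lambda_star \<alpha> \<longrightarrow>
         (\<exists>!\<beta>. beta_eq \<alpha> N \<beta>) \<and> is_maximizer \<alpha> N 1 (THE \<beta>. beta_eq \<alpha> N \<beta>))"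
proof -
  have "0 < \<alpha>" using assms(1) by simp
  have ex1_lambda: "\<exists>!\<Lambda>. lambda_eq \<alpha> \<Lambda>" using assms(1) by (rule ex1_lambda_eq)
  then have lambda: "lambda_eq \<alpha> (Lambda_star \<alpha>)" unfolding Lambda_star_def by (rule theI')
  show ?thesis
  proof (intro conjI impI)
    assume "Lambda_star \<alpha> < N"
    then show "is_maximizer \<alpha> N (Lambda_star \<alpha> / N) (Lambda_star \<alpha> powr (- \<alpha> / 2))"
      using is_maximizer_interior[OF \<open>0 < \<alpha>\<close> lambda] by blast
  next
    assume "N \<le> Lambda_star \<alpha>"
    then have ex1_beta: "\<exists>!\<beta>. beta_eq \<alpha> N \<beta>"
      using ex1_beta_eq[OF \<open>0 < \<alpha>\<close> assms(2) lambda] by blast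
    then show "\<exists>!\<beta>. beta_eq \<alpha> N \<beta>" .
    show "is_maximizer \<alpha> N 1 (THE \<beta>. beta_eq \<alpha> N \<beta>)"
      using is_maximizer_full_access[OF \<open>0 < \<alpha>\<close> assms(2) lambda \<open>N \<le> Lambda_star \<alpha>\<close>]
        theI'[OF ex1_beta] by blast
  qed (rule ex1_lambda)
qed

end
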